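(* Let $X$ be a finite dimensional real Banach space and let $f: X \to X$ be piecewise affine and nonexpansive with respect to the norm of $X$. Suppose $v, w \in X$ satisfy $f(v + tw) = v + (t+1)w$ for all $t \ge 0$. Let $g(x) = f(x) - w$ for $x \in X$. Then for every $x \in X$ there exists $m \in \mathbb{N}$ such that $$f^{k+m}(x) = g^k(f^m(x)) + k w$$ for all $k \in \mathbb{N}$.
   Context: $f$ is piecewise affine if $X$ is a finite union of closed convex sets on each of which $f$ agrees with an affine map. $f$ is nonexpansive with respect to the norm if $\|f(x) - f(y)\| \le \|x - y\|$ for all $x,y$. *)

theory Defs
  imports "HOL-Analysis.Analysis"
begin

definition piecewise_affine :: "('a::real_normed_vector \<Rightarrow> 'a) \<Rightarrow> bool" where
  "piecewise_affine f \<longleftrightarrow>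
     (\<exists>\<C>. finite \<C> \<and> \<Union>\<C> = UNIV \<and>
        (\<forall>S\<in>\<C>. closed S \<and> convex S \<and>
           (\<exists>A b. linear A \<and> (\<forall>x\<in>S. f x = A x + b))))"

definition nonexpansive :: "('a::real_normed_vector \<Rightarrow> 'a) \<Rightarrow> bool" where
  "nonexpansive f \<longleftrightarrow> (\<forall>x y. norm (f x - f y) \<le> norm (x - y))"

end

theory Submission
  imports Defs
begin

text \<open>The drifted orbit \<open>f\<^sup>n x - n w\<close> stays within \<open>\<parallel>x - v\<parallel>\<close> of \<open>v\<close>, since \<open>f\<^sup>n v = v + n w\<close>
  and \<open>f\<close> is nonexpansive. A closed convex piece that is not invariant under translation by
  \<open>w\<close> is left for good by any bounded set pushed far enough along \<open>w\<close>; so after \<open>m\<close> steps,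
  with \<open>m\<close> large, every point \<open>f\<^sup>n x - (n - m) w\<close> (\<open>n \<ge> m\<close>) lies in a piece invariant under translation
  by \<open>w\<close>. On such a piece \<open>f\<close> is affine, and its linear part fixes \<open>w\<close> because otherwise
  the images of the rays from a point of the piece and from \<open>v\<close> would drift apart. Hence \<open>f\<close>
  commutes with translation by \<open>w\<close> at those points, which is the claimed identity.\<close>

definition recession_direction :: "'a::real_vector \<Rightarrow> 'a set \<Rightarrow> bool" where
  "recession_direction w S \<longleftrightarrow> (\<forall>s\<in>S. \<forall>t\<ge>0. s + t *\<^sub>R w \<in> S)"

lemma convex_approaches_ray:
  fixes S :: "'a::real_normed_vector set"
  assumes "convex S" and "s \<in> S" and "p + t *\<^sub>R w \<in> S" and "0 \<le> \<tau>" and "\<tau> \<le> t"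
  shows "\<exists>y\<in>S. dist y (s + \<tau> *\<^sub>R w) \<le> \<tau> / t * norm (p - s)"
proof -
  define l where "l = \<tau> / t"
  have l: "0 \<le> l" "l \<le> 1" "l * t = \<tau>"
    using assms(4,5) by (cases "t = 0"; simp add: l_def)+
  have "(1 - l) *\<^sub>R s + l *\<^sub>R (p + t *\<^sub>R w) \<in> S"
    using convexD[OF assms(1-3), of "1 - l" l] l by simp
  moreover have "(1 - l) *\<^sub>R s + l *\<^sub>R (p + t *\<^sub>R w) = (s + \<tau> *\<^sub>R w) + l *\<^sub>R (p - s)"
    by (simp add: algebra_simps flip: l(3))
  ultimately show ?thesis
    using l assms(4,5) by (intro bexI[where x = "(1 - l) *\<^sub>R s + l *\<^sub>R (p + t *\<^sub>R w)"])
      (auto simp: dist_norm l_def)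
qed

lemma closed_convex_escapes_along:
  fixes S :: "'a::real_normed_vector set"
  assumes "closed S" and "convex S" and "bounded B" and "\<not> recession_direction w S"
  shows "eventually (\<lambda>t. \<forall>p\<in>B. p + t *\<^sub>R w \<notin> S) at_top"
proof -
  obtain s \<tau> where s: "s \<in> S" and \<tau>: "0 \<le> \<tau>" and out: "s + \<tau> *\<^sub>R w \<notin> S"
    using assms(4) unfolding recession_direction_def by blast
  obtain R where R: "\<And>p. p \<in> B \<Longrightarrow> norm p \<le> R"
    using assms(3) unfolding bounded_iff by blast
  obtain e where e: "e > 0" and far: "\<And>y. y \<in> S \<Longrightarrow> e \<le> dist y (s + \<tau> *\<^sub>R w)"
    using out closed_approachable[OF assms(1)] by (metis not_le)
  define T where "T = max 1 (max \<tau> (\<tau> * (R + norm s) / e + 1))"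
  have "\<forall>p\<in>B. p + t *\<^sub>R w \<notin> S" if t: "T \<le> t" for t
  proof (intro ballI notI)
    fix p assume p: "p \<in> B" and pS: "p + t *\<^sub>R w \<in> S"
    have t0: "0 < t" and "\<tau> \<le> t" and te: "\<tau> * (R + norm s) < e * t"
      using t e by (auto simp: T_def field_simps)
    obtain y where "y \<in> S" and y: "dist y (s + \<tau> *\<^sub>R w) \<le> \<tau> / t * norm (p - s)"
      using convex_approaches_ray[OF assms(2) s pS \<tau> \<open>\<tau> \<le> t\<close>] by blast
    have "\<tau> / t * norm (p - s) \<le> \<tau> / t * (R + norm s)"
      using \<tau> t0 R[OF p] norm_triangle_ineq4[of p s] by (intro mult_left_mono) auto
    also have "\<dots> < e"
      using te t0 by (simp add: field_simps)
    finally show False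
      using far[OF \<open>y \<in> S\<close>] y by linarith
  qed
  then show ?thesis
    unfolding eventually_at_top_linorder by blast
qed

lemma bounded_ray_imp_direction_zero:
  fixes c d :: "'a::real_normed_vector"
  assumes "\<And>t. 0 \<le> t \<Longrightarrow> norm (c + t *\<^sub>R d) \<le> K"
  shows "d = 0"
proof (rule ccontr)
  assume "d \<noteq> 0"
  define t where "t = (K + norm c + 1) / norm d"
  have "0 \<le> K" using assms[of 0] norm_ge_zero order_trans by blast
  then have "0 \<le> t" and "norm (t *\<^sub>R d) = K + norm c + 1"
    using \<open>d \<noteq> 0\<close> by (auto simp: t_def)
  moreover have "norm (t *\<^sub>R d) \<le> norm (c + t *\<^sub>R d) + norm c"
    by (metis add_diff_cancel_left' norm_triangle_ineq4 add.commute)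
  ultimately show False
    using assms[of t] by linarith
qed

lemma nonexpansive_affine_piece_translation:
  fixes f :: "'a::real_normed_vector \<Rightarrow> 'a"
  assumes "nonexpansive f"
    and ray: "\<forall>t::real. t \<ge> 0 \<longrightarrow> f (v + t *\<^sub>R w) = v + (t + 1) *\<^sub>R w"
    and "recession_direction w S" and "linear A" and affine: "\<forall>x\<in>S. f x = A x + b"
    and "z \<in> S" and "0 \<le> s"
  shows "f (z + s *\<^sub>R w) = f z + s *\<^sub>R w"
proof -
  have fz: "f (z + t *\<^sub>R w) = A z + b + t *\<^sub>R A w" if "0 \<le> t" for t
    using assms(3,6) that affine unfolding recession_direction_def
    by (simp add: linear_add[OF \<open>linear A\<close>] linear_scale[OF \<open>linear A\<close>])
  have "A w - w = 0"
  proof (rule bounded_ray_imp_direction_zero)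
    fix t :: real assume "0 \<le> t"
    have "norm (f (z + t *\<^sub>R w) - f (v + t *\<^sub>R w)) \<le> norm (z - v)"
      using \<open>nonexpansive f\<close> unfolding nonexpansive_def by (metis add_diff_cancel_right)
    then show "norm ((A z + b - v - w) + t *\<^sub>R (A w - w)) \<le> norm (z - v)"
      using fz[OF \<open>0 \<le> t\<close>] ray \<open>0 \<le> t\<close> by (simp add: algebra_simps)
  qed
  then show ?thesis
    using fz[OF \<open>0 \<le> s\<close>] fz[of 0] by simp
qed

lemma funpow_on_ray:
  fixes f :: "'a::real_vector \<Rightarrow> 'a"
  assumes "\<forall>t::real. t \<ge> 0 \<longrightarrow> f (v + t *\<^sub>R w) = v + (t + 1) *\<^sub>R w"
  shows "(f ^^ n) v = v + real n *\<^sub>R w"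
proof (induction n)
  case (Suc n)
  then show ?case
    using assms[rule_format, of "real n"] by (simp add: add.commute)
qed simp

lemma nonexpansive_funpow:
  assumes "nonexpansive f"
  shows "nonexpansive (f ^^ n)"
proof (induction n)
  case (Suc n)
  then show ?case
    using assms unfolding nonexpansive_def by (metis funpow.simps(2) o_apply order_trans)
qed (simp add: nonexpansive_def)

lemma bounded_drifted_orbit:
  assumes "nonexpansive f"
    and "\<forall>t::real. t \<ge> 0 \<longrightarrow> f (v + t *\<^sub>R w) = v + (t + 1) *\<^sub>R w"
  shows "bounded (range (\<lambda>n. (f ^^ n) x - real n *\<^sub>R w))"
proof (rule bounded_subset[OF bounded_cball], intro image_subsetI)
  fix n
  have "norm ((f ^^ n) x - (f ^^ n) v) \<le> norm (x - v)"
    using nonexpansive_funpow[OF assms(1)] unfolding nonexpansive_def by blast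
  then show "(f ^^ n) x - real n *\<^sub>R w \<in> cball v (norm (x - v))"
    using funpow_on_ray[OF assms(2)] by (simp add: dist_norm norm_minus_commute algebra_simps)
qed

lemma piecewise_affine_translation_far_out:
  fixes f :: "'a::real_normed_vector \<Rightarrow> 'a"
  assumes "piecewise_affine f" and "nonexpansive f"
    and "\<forall>t::real. t \<ge> 0 \<longrightarrow> f (v + t *\<^sub>R w) = v + (t + 1) *\<^sub>R w"
    and "bounded B"
  shows "\<exists>m::nat. \<forall>p\<in>B. \<forall>s\<ge>0.
           f (p + real m *\<^sub>R w + s *\<^sub>R w) = f (p + real m *\<^sub>R w) + s *\<^sub>R w"
proof -
  obtain \<C> where "finite \<C>" and cover: "\<Union>\<C> = UNIV"
    and pieces: "\<And>S. S \<in> \<C> \<Longrightarrow> closed S \<and> convex S \<and> (\<exists>A b. linear A \<and> (\<forall>x\<in>S. f x = A x + b))"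
    using assms(1) unfolding piecewise_affine_def by blast
  define N where "N = {S \<in> \<C>. \<not> recession_direction w S}"
  have "eventually (\<lambda>t. \<forall>S\<in>N. \<forall>p\<in>B. p + t *\<^sub>R w \<notin> S) at_top"
    using \<open>finite \<C>\<close> pieces closed_convex_escapes_along[OF _ _ assms(4)]
    by (intro eventually_ball_finite) (auto simp: N_def)
  then have "eventually (\<lambda>m. \<forall>S\<in>N. \<forall>p\<in>B. p + real m *\<^sub>R w \<notin> S) sequentially"
    by (rule eventually_compose_filterlim[OF _ filterlim_real_sequentially])
  then obtain m :: nat where m: "\<And>S p. S \<in> N \<Longrightarrow> p \<in> B \<Longrightarrow> p + real m *\<^sub>R w \<notin> S"
    unfolding eventually_sequentially by blast
  have "f (p + real m *\<^sub>R w + s *\<^sub>R w) = f (p + real m *\<^sub>R w) + s *\<^sub>R w"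
    if "p \<in> B" and "0 \<le> s" for p s
  proof -
    obtain S where "S \<in> \<C>" and S: "p + real m *\<^sub>R w \<in> S"
      using cover by blast
    then have "recession_direction w S"
      using m[OF _ \<open>p \<in> B\<close>] unfolding N_def by blast
    moreover obtain A b where "linear A" and "\<forall>x\<in>S. f x = A x + b"
      using pieces[OF \<open>S \<in> \<C>\<close>] by blast
    ultimately show ?thesis
      using nonexpansive_affine_piece_translation[OF assms(2,3)] S \<open>0 \<le> s\<close> by blast
  qed
  then show ?thesis by blast
qed

lemma funpow_eq_shifted_funpow:
  fixes f :: "'a::real_vector \<Rightarrow> 'a"
  assumes "\<And>k. f ((f ^^ (k + m)) x) = f ((f ^^ (k + m)) x - real k *\<^sub>R w) + real k *\<^sub>R w"
  shows "(f ^^ (k + m)) x = ((\<lambda>y. f y - w) ^^ k) ((f ^^ m) x) + real k *\<^sub>R w"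
proof (induction k)
  case (Suc k)
  have "((\<lambda>y. f y - w) ^^ k) ((f ^^ m) x) = (f ^^ (k + m)) x - real k *\<^sub>R w"
    using Suc.IH by simp
  then have "((\<lambda>y. f y - w) ^^ Suc k) ((f ^^ m) x) = f ((f ^^ (k + m)) x - real k *\<^sub>R w) - w"
    by simp
  also have "\<dots> = f ((f ^^ (k + m)) x) - real (Suc k) *\<^sub>R w"
    using assms[of k] by (simp add: algebra_simps)
  finally show ?case
    by simp
qed simp

theorem mainTheorem9:
  fixes f :: "'a::banach \<Rightarrow> 'a" and v w :: 'a
  assumes "\<exists>B. finite B \<and> span B = (UNIV :: 'a set)"
    and "piecewise_affine f"
    and "nonexpansive f"
    and "\<forall>t::real. t \<ge> 0 \<longrightarrow> f (v + t *\<^sub>R w) = v + (t + 1) *\<^sub>R w"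
  shows "\<forall>x. \<exists>m::nat. \<forall>k::nat.
           (f ^^ (k + m)) x = ((\<lambda>y. f y - w) ^^ k) ((f ^^ m) x) + real k *\<^sub>R w"
proof
  fix x
  define P where "P n = (f ^^ n) x - real n *\<^sub>R w" for n
  obtain m :: nat where m: "\<And>p s. p \<in> range P \<Longrightarrow> 0 \<le> s \<Longrightarrow>
      f (p + real m *\<^sub>R w + s *\<^sub>R w) = f (p + real m *\<^sub>R w) + s *\<^sub>R w"
    using piecewise_affine_translation_far_out[OF assms(2-4) bounded_drifted_orbit[OF assms(3,4)]]
    unfolding P_def by blast
  have "f ((f ^^ (k + m)) x) = f ((f ^^ (k + m)) x - real k *\<^sub>R w) + real k *\<^sub>R w" for k
    using m[OF rangeI[of P "k + m"], of "real k"] by (simp add: P_def algebra_simps)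
  then show "\<exists>m. \<forall>k. (f ^^ (k + m)) x = ((\<lambda>y. f y - w) ^^ k) ((f ^^ m) x) + real k *\<^sub>R w"
    using funpow_eq_shifted_funpow by blast
qed

end
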